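(* Let $n\ge 1$. For any code $C_n\in\mathbb{S}_n$ with codeword lengths $l_1,\dots,l_n$, there exist an integer $m\le\sum_{i=1}^n(l_i-1)$ (in particular $m=O(n^2)$) and symmetric fix-free codes $S_n^{(1)},\dots,S_n^{(m)}\in\mathbb{S}_n$ such that $R_n=S_n^{(0)}\rightarrow S_n^{(1)}\rightarrow\cdots\rightarrow S_n^{(m)}=C_n$, and such that for each $i\in\{0,1,\dots,m-1\}$ every codeword of $C_n$ has a prefix in $S_n^{(i)}$. Furthermore, there exist codes $B_n\in\mathbb{S}_n$ for which any such sequence from $R_n$ to $B_n$ requires $m=\Omega(n^{1.5})$ codes.
   Context: All strings are finite binary strings; $|w|$ denotes length. A palindrome is a string equal to its reversal. A symmetric fix-free code is a finite set of binary palindromes no one of which is a proper prefix of another. $\mathbb{S}_n$ is the set of symmetric fix-free codes with exactly $n$ codewords which do not contain the string $1$ and all of whose codewords have length at most $n$. $R_n=\{s_1,\dots,s_n\}$ with $s_1=0$ and $s_i=1\,0^{i-2}\,1$ for $2\le i\le n$ (so $|s_i|=i$). For a palindrome $\sigma$, $\mathcal{N}(\sigma)$ is the set of palindromes $w$ such that $\sigma$ is the longest palindrome that is a proper prefix of $w$, and $\mathcal{N}_n(\sigma)=\{w\in\mathcal{N}(\sigma):|w|\le n\}$. For $S,\hat S\in\mathbb{S}_n$, write $S\rightarrow\hat S$ if there is $\sigma\in S$ with $\hat S\subseteq (S\cup\mathcal{N}_n(\sigma))\setminus\{\sigma\}$. "Prefix" includes equality. *)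

theory Defs
  imports Complex_Main "HOL-Library.Sublist"
begin

text \<open>Binary strings are bool lists: False = 0, True = 1.\<close>

definition palindrome :: "bool list \<Rightarrow> bool" where
  "palindrome w \<longleftrightarrow> rev w = w"

definition sym_fixfree :: "bool list set \<Rightarrow> bool" where
  "sym_fixfree S \<longleftrightarrow> finite S \<and> (\<forall>w\<in>S. palindrome w \<and> w \<noteq> [])
     \<and> (\<forall>u\<in>S. \<forall>v\<in>S. \<not> strict_prefix u v)"

definition SS :: "nat \<Rightarrow> bool list set set" where
  "SS n = {S. sym_fixfree S \<and> card S = n \<and> [True] \<notin> S \<and> (\<forall>w\<in>S. length w \<le> n)}"

definition R :: "nat \<Rightarrow> bool list set" where
  "R n = {[False]} \<union> {[True] @ replicate (i - 2) False @ [True] | i. 2 \<le> i \<and> i \<le> n}"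

definition Nset :: "bool list \<Rightarrow> bool list set" where
  "Nset \<sigma> = {w. palindrome w \<and> palindrome \<sigma> \<and> strict_prefix \<sigma> w \<and>
      (\<forall>\<tau>. palindrome \<tau> \<and> strict_prefix \<tau> w \<longrightarrow> length \<tau> \<le> length \<sigma>)}"

definition Nset_n :: "nat \<Rightarrow> bool list \<Rightarrow> bool list set" where
  "Nset_n n \<sigma> = {w \<in> Nset \<sigma>. length w \<le> n}"

definition step :: "nat \<Rightarrow> bool list set \<Rightarrow> bool list set \<Rightarrow> bool" where
  "step n S S' \<longleftrightarrow> (\<exists>\<sigma>\<in>S. S' \<subseteq> (S \<union> Nset_n n \<sigma>) - {\<sigma>})"

definition good_seq :: "nat \<Rightarrow> bool list set \<Rightarrow> nat \<Rightarrow> (nat \<Rightarrow> bool list set) \<Rightarrow> bool" where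
  "good_seq n C m Sq \<longleftrightarrow> Sq 0 = R n \<and> Sq m = C
     \<and> (\<forall>i. 1 \<le> i \<and> i \<le> m \<longrightarrow> Sq i \<in> SS n)
     \<and> (\<forall>i<m. step n (Sq i) (Sq (Suc i)))
     \<and> (\<forall>i<m. \<forall>c\<in>C. \<exists>s\<in>Sq i. prefix s c)"

end

theory Submission imports Defs "HOL-Library.Discrete_Functions" begin

text \<open>Call the palindromes that are proper prefixes of codewords of \<open>C\<close> and extend some word of
  \<open>S\<close> the potential of \<open>S\<close> with respect to \<open>C\<close>. A step that splits \<open>\<sigma>\<close> replaces it by
  words of \<open>N(\<sigma>)\<close>, whose proper palindromic prefixes are prefixes of \<open>\<sigma>\<close>; so a step adds at
  most \<open>\<sigma>\<close> to the potential of the start code with respect to the current one, and a sequence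
  from \<open>R\<^sub>n\<close> to \<open>C\<close> has at least as many steps as the potential of \<open>R\<^sub>n\<close> has elements.
  Conversely, while \<open>S \<noteq> C\<close> some \<open>\<sigma> \<in> S\<close> is a proper prefix of a codeword; keeping the
  words below codewords, with \<open>\<sigma>\<close> replaced by its children below codewords and padded with
  unused words of \<open>S\<close>, is a step that removes \<open>\<sigma>\<close> from the potential. Since every element of
  the potential is a nonempty proper prefix of a codeword, this gives at most
  \<open>\<Sum>(l\<^sub>i - 1)\<close> steps.

  For the lower bound, the \<open>n\<close> codewords \<open>(0\<^sup>a 1 0\<^sup>b 1)\<^sup>K 0\<^sup>a\<close> with distinct pairs
  \<open>1 \<le> a, b \<le> \<lfloor>\<surd>n\<rfloor> + 1\<close> and \<open>K \<approx> \<surd>n / 2\<close> have length at most \<open>n\<close> and \<open>K - 1\<close> distinct proper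
  palindromic prefixes \<open>(0\<^sup>a 1 0\<^sup>b 1)\<^sup>j 0\<^sup>a\<close> each, all extending the codeword \<open>0\<close> of \<open>R\<^sub>n\<close>:
  a potential of order \<open>n \<surd>n\<close>.\<close>

definition prefix_free :: "'a list set \<Rightarrow> bool" where
  "prefix_free A \<longleftrightarrow> (\<forall>u\<in>A. \<forall>v\<in>A. \<not> strict_prefix u v)"

definition covers :: "'a list set \<Rightarrow> 'a list set \<Rightarrow> bool" where
  "covers S C \<longleftrightarrow> (\<forall>c\<in>C. \<exists>s\<in>S. prefix s c)"

definition potential :: "bool list set \<Rightarrow> bool list set \<Rightarrow> bool list set" where
  "potential C S = {p. palindrome p \<and> (\<exists>c\<in>C. strict_prefix p c) \<and> (\<exists>s\<in>S. prefix s p)}"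

lemma mem_SS_iff:
  "S \<in> SS n \<longleftrightarrow> finite S \<and> (\<forall>w\<in>S. palindrome w \<and> w \<noteq> []) \<and> prefix_free S
     \<and> card S = n \<and> [True] \<notin> S \<and> (\<forall>w\<in>S. length w \<le> n)"
  unfolding SS_def sym_fixfree_def prefix_free_def by auto

lemma prefix_replicate_cancel:
  assumes "x \<noteq> y" and "prefix (replicate a x @ y # xs) (replicate a' x @ y # ys)"
  shows "a = a' \<and> prefix xs ys"
  using assms(2)
proof (induction a arbitrary: a')
  case 0 then show ?case using assms(1) by (cases a') auto
next
  case (Suc a) then show ?case using assms(1) by (cases a') auto
qed

lemma prefix_free_subset: "prefix_free A \<Longrightarrow> B \<subseteq> A \<Longrightarrow> prefix_free B"
  unfolding prefix_free_def by blast

lemma card_le_if_prefix_free_below: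
  assumes "finite C" and "prefix_free A" and "\<forall>a\<in>A. \<exists>c\<in>C. prefix a c"
  shows "card A \<le> card C"
proof -
  obtain f where f: "\<forall>a\<in>A. f a \<in> C \<and> prefix a (f a)" using assms(3) by metis
  have "inj_on f A"
  proof (rule inj_onI)
    fix a b assume "a \<in> A" "b \<in> A" "f a = f b"
    then have "prefix a b \<or> prefix b a" using f prefix_same_cases by metis
    with \<open>a \<in> A\<close> \<open>b \<in> A\<close> show "a = b"
      using assms(2) unfolding prefix_free_def by (metis prefix_order.le_less)
  qed
  with f assms(1) show ?thesis by (metis card_inj_on_le image_subsetI)
qed

lemma card_nonempty_strict_prefixes:
  "card {p. strict_prefix p c \<and> p \<noteq> []} \<le> length c - 1"
proof -
  have "{p. strict_prefix p c \<and> p \<noteq> []} \<subseteq> (\<lambda>k. take k c) ` {1..<length c}"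
  proof
    fix p assume p: "p \<in> {p. strict_prefix p c \<and> p \<noteq> []}"
    then have "p = take (length p) c"
      by (metis append_eq_conv_conj mem_Collect_eq prefix_def prefix_order.less_imp_le)
    moreover have "length p \<in> {1..<length c}" using p prefix_length_less by (auto simp: Suc_leI)
    ultimately show "p \<in> (\<lambda>k. take k c) ` {1..<length c}" by blast
  qed
  then have "card {p. strict_prefix p c \<and> p \<noteq> []} \<le> card ((\<lambda>k. take k c) ` {1..<length c})"
    by (rule card_mono[rotated]) simp
  also have "\<dots> \<le> length c - 1" using card_image_le[of "{1..<length c}"] by simp
  finally show ?thesis .
qed

definition R_word :: "nat \<Rightarrow> bool list" where
  "R_word i = [True] @ replicate (i - 2) False @ [True]"

lemma R_eq: "R n = insert [False] (R_word ` {2..n})"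
  unfolding R_def R_word_def by auto

lemma prefix_free_R: "prefix_free (R n)"
  unfolding prefix_free_def R_eq
proof (intro ballI notI)
  fix u v assume u: "u \<in> insert [False] (R_word ` {2..n})" and v: "v \<in> insert [False] (R_word ` {2..n})"
    and uv: "strict_prefix u v"
  then have "u \<noteq> [False]" "v \<noteq> [False]" by (auto simp: R_word_def)
  then obtain i j where "u = R_word i" "v = R_word j" using u v by auto
  moreover have "prefix u v" using uv by simp
  ultimately have "prefix (replicate (i-2) False @ [True]) (replicate (j-2) False @ [True])"
    by (simp add: R_word_def)
  then have "i - 2 = j - 2" using prefix_replicate_cancel[of False True] by blast
  with uv \<open>u = R_word i\<close> \<open>v = R_word j\<close> show False by (simp add: R_word_def)
qed

lemma R_in_SS: assumes "n \<ge> 1" shows "R n \<in> SS n"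
proof -
  have "inj_on R_word {2..n}"
    by (rule inj_onI) (auto simp: R_word_def)
  moreover have "[False] \<notin> R_word ` {2..n}" by (auto simp: R_word_def)
  ultimately have "card (R n) = n" unfolding R_eq using assms by (simp add: card_image)
  moreover have "\<forall>w\<in>R n. palindrome w \<and> w \<noteq> [] \<and> length w \<le> n"
    unfolding R_eq palindrome_def R_word_def using assms by auto
  moreover have "[True] \<notin> R n" unfolding R_eq R_word_def by auto
  ultimately show ?thesis unfolding mem_SS_iff using prefix_free_R by (simp add: R_eq)
qed

lemma covers_R: assumes "C \<in> SS n" shows "covers (R n) C"
  unfolding covers_def
proof
  fix c assume "c \<in> C"
  then have pal: "palindrome c" and "c \<noteq> []" "c \<noteq> [True]" and len: "length c \<le> n"
    using assms unfolding mem_SS_iff by auto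
  then obtain x rest where c: "c = x # rest" by (cases c) auto
  show "\<exists>\<rho>\<in>R n. prefix \<rho> c"
  proof (cases x)
    case False
    then show ?thesis using c unfolding R_def by auto
  next
    case True
    have "rest \<noteq> []" using \<open>c \<noteq> [True]\<close> c True by auto
    moreover have "last c = hd c" using pal \<open>c \<noteq> []\<close> unfolding palindrome_def by (metis hd_rev)
    ultimately have "last rest = True" using c True by simp
    then have "True \<in> set rest" using \<open>rest \<noteq> []\<close> last_in_set by metis
    then obtain ys zs where yz: "rest = ys @ True # zs" "True \<notin> set ys"
      by (metis split_list_first)
    then have ys: "ys = replicate (length ys) False" by (metis (full_types) replicate_length_same)
    have "R_word (length ys + 2) \<in> R n" using len c yz unfolding R_eq by auto
    moreover have "R_word (length ys + 2) = [True] @ ys @ [True]" using ys unfolding R_word_def by simp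
    then have "prefix (R_word (length ys + 2)) c" using c True yz by simp
    ultimately show ?thesis by blast
  qed
qed

lemma exists_child_prefix:
  assumes "palindrome c" and "palindrome \<sigma>" and "strict_prefix \<sigma> c"
  shows "\<exists>w\<in>Nset \<sigma>. prefix w c"
proof -
  define L where "L = {k. length \<sigma> < k \<and> k \<le> length c \<and> palindrome (take k c)}"
  have "length c \<in> L" unfolding L_def using assms prefix_length_less by auto
  then have kL: "(LEAST k. k \<in> L) \<in> L" by (rule LeastI)
  define w where "w = take (LEAST k. k \<in> L) c"
  have wc: "prefix w c" unfolding w_def by (rule take_is_prefix)
  have lw: "length w = (LEAST k. k \<in> L)" using kL unfolding L_def w_def by auto
  have "strict_prefix \<sigma> w"
    using prefix_length_prefix[of \<sigma> c w] assms(3) wc lw kL unfolding L_def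
    by (auto simp: prefix_order.le_less)
  moreover have "length \<tau> \<le> length \<sigma>" if "palindrome \<tau>" "strict_prefix \<tau> w" for \<tau>
  proof (rule ccontr)
    assume "\<not> length \<tau> \<le> length \<sigma>"
    moreover have "prefix \<tau> c" using that wc
      by (meson prefix_order.less_le_trans prefix_order.less_imp_le)
    ultimately have "length \<tau> \<in> L" unfolding L_def using that
      by (auto simp: prefix_length_le) (metis append_eq_conv_conj prefix_def)
    then have "length w \<le> length \<tau>" using lw by (simp add: Least_le)
    then show False using that(2) prefix_length_less by fastforce
  qed
  moreover have "palindrome w" using kL unfolding L_def w_def by auto
  ultimately show ?thesis using wc assms(2) unfolding Nset_def by blast
qed

lemma prefix_free_replace_by_children:
  assumes "prefix_free S" and "\<sigma> \<in> S"
  shows "prefix_free ((S - {\<sigma>}) \<union> Nset \<sigma>)"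
  unfolding prefix_free_def
proof (intro ballI notI)
  have child: "palindrome w" "strict_prefix \<sigma> w"
    "\<And>\<tau>. palindrome \<tau> \<Longrightarrow> strict_prefix \<tau> w \<Longrightarrow> length \<tau> \<le> length \<sigma>"
    if "w \<in> Nset \<sigma>" for w
    using that unfolding Nset_def by auto
  fix u v assume u: "u \<in> (S - {\<sigma>}) \<union> Nset \<sigma>" and v: "v \<in> (S - {\<sigma>}) \<union> Nset \<sigma>"
    and uv: "strict_prefix u v"
  consider "u \<in> Nset \<sigma>" "v \<in> Nset \<sigma>" | "u \<in> Nset \<sigma>" "v \<in> S - {\<sigma>}" | "u \<in> S - {\<sigma>}" "v \<in> Nset \<sigma>"
    | "u \<in> S - {\<sigma>}" "v \<in> S - {\<sigma>}" using u v by blast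
  then show False
  proof cases
    case 1
    then have "length u \<le> length \<sigma>" "length \<sigma> < length u"
      using child uv prefix_length_less by blast+
    then show False by simp
  next
    case 2
    then have "strict_prefix \<sigma> v" using child(2) uv by (meson prefix_order.less_trans)
    then show False using 2 assms unfolding prefix_free_def by blast
  next
    case 3
    then have "prefix u \<sigma> \<or> prefix \<sigma> u" using child(2) uv
      by (meson prefix_order.less_imp_le prefix_same_cases)
    then show False using 3 assms unfolding prefix_free_def by (auto simp: prefix_order.le_less)
  next
    case 4
    then show False using uv assms unfolding prefix_free_def by blast
  qed
qed

lemma finite_Nset_n: "finite (Nset_n n \<sigma>)"
  by (rule finite_subset[OF _ finite_lists_length_le[of UNIV n]]) (auto simp: Nset_n_def)

lemma refinement_in_SS:
  assumes S: "S \<in> SS n" and "\<sigma> \<in> S" and S': "S' \<subseteq> (S - {\<sigma>}) \<union> Nset_n n \<sigma>" "card S' = n"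
  shows "S' \<in> SS n"
proof -
  have child: "palindrome w \<and> strict_prefix \<sigma> w \<and> length w \<le> n" if "w \<in> Nset_n n \<sigma>" for w
    using that unfolding Nset_n_def Nset_def by auto
  have "\<sigma> \<noteq> []" using S \<open>\<sigma> \<in> S\<close> unfolding mem_SS_iff by auto
  moreover have "length \<sigma> < 1" if "[True] \<in> Nset_n n \<sigma>"
    using child[OF that] prefix_length_less by fastforce
  ultimately have "[True] \<notin> Nset_n n \<sigma>" by auto
  moreover have "prefix_free ((S - {\<sigma>}) \<union> Nset \<sigma>)"
    using S \<open>\<sigma> \<in> S\<close> prefix_free_replace_by_children unfolding mem_SS_iff by blast
  moreover note finite_Nset_n
  moreover have "S' \<subseteq> (S - {\<sigma>}) \<union> Nset \<sigma>" using S'(1) by (auto simp: Nset_n_def)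
  ultimately have "prefix_free S'" and "[True] \<notin> S'" and "finite S'"
    using S S'(1) unfolding mem_SS_iff by (auto intro: prefix_free_subset finite_subset)
  moreover have "palindrome w \<and> w \<noteq> [] \<and> length w \<le> n" if "w \<in> S'" for w
    using S child[of w] subsetD[OF S'(1) that] unfolding mem_SS_iff by auto
  ultimately show ?thesis using S'(2) unfolding mem_SS_iff by blast
qed

definition refinement :: "bool list set \<Rightarrow> bool list set \<Rightarrow> bool list \<Rightarrow> bool list set" where
  "refinement C S \<sigma> = ({s \<in> S. \<exists>c\<in>C. prefix s c} - {\<sigma>}) \<union> {w \<in> Nset \<sigma>. \<exists>c\<in>C. prefix w c}"

lemma covers_refinement:
  assumes "covers S C" and "\<sigma> \<in> S" and "palindrome \<sigma>" and "\<sigma> \<notin> C" and "\<forall>c\<in>C. palindrome c"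
  shows "covers (refinement C S \<sigma>) C"
  unfolding covers_def
proof
  fix c assume "c \<in> C"
  then obtain s where "s \<in> S" "prefix s c" using assms(1) unfolding covers_def by blast
  show "\<exists>s\<in>refinement C S \<sigma>. prefix s c"
  proof (cases "s = \<sigma>")
    case False
    then show ?thesis using \<open>s \<in> S\<close> \<open>prefix s c\<close> \<open>c \<in> C\<close> unfolding refinement_def by blast
  next
    case True
    then have "strict_prefix \<sigma> c" using \<open>prefix s c\<close> \<open>c \<in> C\<close> assms(4)
      by (auto simp: prefix_order.le_less)
    then obtain w where "w \<in> Nset \<sigma>" "prefix w c"
      using exists_child_prefix assms(3,5) \<open>c \<in> C\<close> by blast
    then show ?thesis using \<open>c \<in> C\<close> unfolding refinement_def by blast
  qed
qed

lemma refinement_subset: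
  assumes "\<forall>c\<in>C. length c \<le> n"
  shows "refinement C S \<sigma> \<subseteq> (S - {\<sigma>}) \<union> Nset_n n \<sigma>"
  using assms prefix_length_le unfolding refinement_def Nset_n_def by fastforce

lemma card_refinement_le:
  assumes "finite C" and "prefix_free S" and "\<sigma> \<in> S"
  shows "card (refinement C S \<sigma>) \<le> card C"
proof (rule card_le_if_prefix_free_below[OF assms(1)])
  have "refinement C S \<sigma> \<subseteq> (S - {\<sigma>}) \<union> Nset \<sigma>" unfolding refinement_def by blast
  then show "prefix_free (refinement C S \<sigma>)"
    using prefix_free_replace_by_children[OF assms(2,3)] prefix_free_subset by blast
  show "\<forall>a\<in>refinement C S \<sigma>. \<exists>c\<in>C. prefix a c" unfolding refinement_def by blast
qed

lemma card_refinement_ge: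
  assumes "finite S" and "prefix_free S" and "\<sigma> \<in> S" and "palindrome \<sigma>"
    and "finite C" and "c0 \<in> C" and "palindrome c0" and "strict_prefix \<sigma> c0"
  shows "card {s \<in> S. \<exists>c\<in>C. prefix s c} \<le> card (refinement C S \<sigma>)"
proof -
  define P where "P = {s \<in> S. \<exists>c\<in>C. prefix s c}"
  define D where "D = {w \<in> Nset \<sigma>. \<exists>c\<in>C. prefix w c}"
  have "\<sigma> \<in> P" using assms(3,6,8) prefix_order.less_imp_le unfolding P_def by blast
  have "finite P" using assms(1) unfolding P_def by simp
  have "finite D" by (rule finite_subset[of _ "\<Union>c\<in>C. set (prefixes c)"]) (auto simp: D_def assms(5))
  have "D \<inter> S = {}" using assms(2,3) unfolding D_def Nset_def prefix_free_def by blast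
  obtain w where "w \<in> Nset \<sigma>" "prefix w c0" using exists_child_prefix assms(4,7,8) by blast
  then have "0 < card D" using \<open>finite D\<close> assms(6) unfolding D_def card_gt_0_iff by blast
  have "card (refinement C S \<sigma>) = card (P - {\<sigma>}) + card D"
    using \<open>D \<inter> S = {}\<close> \<open>finite D\<close> \<open>finite P\<close> unfolding refinement_def P_def D_def
    by (intro card_Un_disjoint) auto
  with \<open>0 < card D\<close> \<open>\<sigma> \<in> P\<close> \<open>finite P\<close> show ?thesis unfolding P_def[symmetric]
    by (simp add: card_Diff_singleton)
qed

lemma potential_refinement_psubset:
  assumes "prefix_free S" and "\<sigma> \<in> S" and "\<sigma> \<in> potential C S" and "S' \<subseteq> (S - {\<sigma>}) \<union> Nset \<sigma>"
  shows "potential C S' \<subset> potential C S"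
proof (rule psubsetI)
  have child: "strict_prefix \<sigma> w" if "w \<in> Nset \<sigma>" for w using that unfolding Nset_def by auto
  show "potential C S' \<subseteq> potential C S"
  proof
    fix p assume "p \<in> potential C S'"
    then obtain s' where p: "palindrome p" "\<exists>c\<in>C. strict_prefix p c" and "s' \<in> S'" "prefix s' p"
      unfolding potential_def by blast
    then have "\<exists>s\<in>S. prefix s p" using assms(2,4) child
      by (metis DiffD1 Un_iff prefix_order.less_imp_le prefix_order.trans subsetD)
    with p show "p \<in> potential C S" unfolding potential_def by blast
  qed
  have "\<sigma> \<notin> potential C S'"
  proof
    assume "\<sigma> \<in> potential C S'"
    then obtain s' where "s' \<in> S'" "prefix s' \<sigma>" unfolding potential_def by blast
    show False
    proof (cases "s' \<in> Nset \<sigma>")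
      case True
      then show False using child \<open>prefix s' \<sigma>\<close>
        by (metis prefix_order.less_le_trans prefix_order.less_irrefl)
    next
      case False
      then have "s' \<in> S" "s' \<noteq> \<sigma>" using \<open>s' \<in> S'\<close> assms(4) by auto
      then show False using \<open>prefix s' \<sigma>\<close> assms(1,2) unfolding prefix_free_def
        by (auto simp: prefix_order.le_less)
    qed
  qed
  then show "potential C S' \<noteq> potential C S" using assms(3) by blast
qed

lemma exists_strict_prefix_of_codeword:
  assumes "covers S C" and "finite S" and "card C = card S" and "S \<noteq> C"
  shows "\<exists>\<sigma>\<in>S. \<exists>c\<in>C. strict_prefix \<sigma> c"
proof (rule ccontr)
  assume "\<not> ?thesis"
  then have "C \<subseteq> S" using assms(1) unfolding covers_def by (fastforce simp: prefix_order.le_less)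
  then show False using assms(2-4) card_subset_eq by metis
qed

lemma exists_padding:
  assumes "finite S" and "P \<subseteq> S" and "finite G" and "card P \<le> card G" and "card G \<le> card S"
    and "G \<inter> (S - P) = {}"
  obtains F where "F \<subseteq> S - P" and "card (G \<union> F) = card S"
proof -
  have "card S - card G \<le> card (S - P)"
    using assms(1,2,4) by (simp add: card_Diff_subset finite_subset)
  then obtain F where "F \<subseteq> S - P" "card F = card S - card G" "finite F"
    by (rule obtain_subset_with_card_n)
  moreover from this have "card (G \<union> F) = card G + card F"
    using assms(3,6) by (intro card_Un_disjoint) auto
  ultimately show ?thesis using assms(5) that by simp
qed

lemma step_towards_code:
  assumes C: "C \<in> SS n" and S: "S \<in> SS n" and cov: "covers S C" and "S \<noteq> C"
  shows "\<exists>S'. S' \<in> SS n \<and> covers S' C \<and> step n S S' \<and> potential C S' \<subset> potential C S"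
proof -
  obtain \<sigma> c0 where \<sigma>: "\<sigma> \<in> S" and "c0 \<in> C" "strict_prefix \<sigma> c0"
    using exists_strict_prefix_of_codeword[OF cov] S C \<open>S \<noteq> C\<close> unfolding mem_SS_iff by force
  have "palindrome \<sigma>" "prefix_free S" "finite S" using S \<sigma> unfolding mem_SS_iff by auto
  have "\<sigma> \<notin> C" using C \<open>c0 \<in> C\<close> \<open>strict_prefix \<sigma> c0\<close> unfolding mem_SS_iff prefix_free_def by blast
  define P where "P = {s \<in> S. \<exists>c\<in>C. prefix s c}"
  define G where "G = refinement C S \<sigma>"
  have "\<sigma> \<in> P"
    using \<sigma> \<open>c0 \<in> C\<close> \<open>strict_prefix \<sigma> c0\<close> prefix_order.less_imp_le unfolding P_def by blast
  have G_sub: "G \<subseteq> (S - {\<sigma>}) \<union> Nset_n n \<sigma>"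
    using C refinement_subset unfolding G_def mem_SS_iff by blast
  have "finite C" "palindrome c0" "card C = card S" using C S \<open>c0 \<in> C\<close> unfolding mem_SS_iff by auto
  have "card P \<le> card G" unfolding P_def G_def
    by (rule card_refinement_ge[OF \<open>finite S\<close> \<open>prefix_free S\<close> \<sigma> \<open>palindrome \<sigma>\<close> \<open>finite C\<close>
          \<open>c0 \<in> C\<close> \<open>palindrome c0\<close> \<open>strict_prefix \<sigma> c0\<close>])
  moreover have "card G \<le> card S"
    using card_refinement_le[OF \<open>finite C\<close> \<open>prefix_free S\<close> \<sigma>] \<open>card C = card S\<close> unfolding G_def by simp
  moreover have "G \<inter> (S - P) = {}" unfolding G_def refinement_def P_def by blast
  moreover have "P \<subseteq> S" "finite G"
    using G_sub \<open>finite S\<close> finite_Nset_n unfolding P_def by (auto intro: finite_subset)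
  \<comment> \<open>pad with words of \<open>S\<close> lying below no codeword, to get back to \<open>n\<close> words\<close>
  ultimately obtain F where F: "F \<subseteq> S - P" and card_S': "card (G \<union> F) = card S"
    using exists_padding \<open>finite S\<close> by metis
  define S' where "S' = G \<union> F"
  have S'_sub: "S' \<subseteq> (S - {\<sigma>}) \<union> Nset_n n \<sigma>" using G_sub F \<open>\<sigma> \<in> P\<close> unfolding S'_def by blast
  have "S' \<in> SS n" using refinement_in_SS[OF S \<sigma> S'_sub] card_S' S unfolding S'_def mem_SS_iff by simp
  moreover have "covers G C"
    using covers_refinement[OF cov \<sigma> \<open>palindrome \<sigma>\<close> \<open>\<sigma> \<notin> C\<close>] C unfolding G_def mem_SS_iff by blast
  then have "covers S' C" unfolding S'_def covers_def by blast
  moreover have "step n S S'"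
    unfolding step_def using \<sigma> S'_sub by (auto simp: Nset_n_def Nset_def)
  moreover have "potential C S' \<subset> potential C S"
  proof (rule potential_refinement_psubset[OF \<open>prefix_free S\<close> \<sigma>])
    show "\<sigma> \<in> potential C S"
      using \<sigma> \<open>palindrome \<sigma>\<close> \<open>c0 \<in> C\<close> \<open>strict_prefix \<sigma> c0\<close> unfolding potential_def by blast
    show "S' \<subseteq> (S - {\<sigma>}) \<union> Nset \<sigma>" using S'_sub by (auto simp: Nset_n_def)
  qed
  ultimately show ?thesis by blast
qed

lemma finite_potential: "finite C \<Longrightarrow> finite (potential C S)"
  by (rule finite_subset[of _ "\<Union>c\<in>C. set (prefixes c)"]) (auto simp: potential_def)

lemma exists_step_sequence:
  assumes C: "C \<in> SS n"
  shows "S \<in> SS n \<Longrightarrow> covers S C \<Longrightarrow> \<exists>m Sq. m \<le> card (potential C S) \<and> Sq 0 = S \<and> Sq m = C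
     \<and> (\<forall>i\<le>m. Sq i \<in> SS n) \<and> (\<forall>i<m. step n (Sq i) (Sq (Suc i))) \<and> (\<forall>i<m. covers (Sq i) C)"
proof (induction "card (potential C S)" arbitrary: S rule: less_induct)
  case less
  show ?case
  proof (cases "S = C")
    case True
    then show ?thesis using less.prems by (intro exI[of _ 0] exI[of _ "\<lambda>_. C"]) auto
  next
    case False
    obtain S' where S': "S' \<in> SS n" "covers S' C" "step n S S'" "potential C S' \<subset> potential C S"
      using step_towards_code[OF C less.prems False] by blast
    have "finite (potential C S)" using C finite_potential unfolding mem_SS_iff by blast
    then have "card (potential C S') < card (potential C S)" using S'(4) psubset_card_mono by blast
    from less.hyps[OF this S'(1,2)] obtain m Sq where "m \<le> card (potential C S')" "Sq 0 = S'" "Sq m = C"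
      "\<forall>i\<le>m. Sq i \<in> SS n" "\<forall>i<m. step n (Sq i) (Sq (Suc i))" "\<forall>i<m. covers (Sq i) C"
      by blast
    moreover have "\<forall>i\<le>Suc m. case_nat S Sq i \<in> SS n"
      using less.prems(1) \<open>\<forall>i\<le>m. Sq i \<in> SS n\<close> by (auto split: nat.split)
    ultimately show ?thesis using less.prems(2) S'(3) \<open>card (potential C S') < card (potential C S)\<close>
      by (intro exI[of _ "Suc m"] exI[of _ "case_nat S Sq"]) (simp add: All_less_Suc2)
  qed
qed

lemma card_potential_le_sum_lengths:
  assumes "finite C" and "\<forall>s\<in>S. s \<noteq> []"
  shows "card (potential C S) \<le> (\<Sum>w\<in>C. length w - 1)"
proof -
  have "potential C S \<subseteq> (\<Union>c\<in>C. {p. strict_prefix p c \<and> p \<noteq> []})"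
    using assms(2) unfolding potential_def by auto
  moreover have "finite {p. strict_prefix p c \<and> p \<noteq> []}" for c
    by (rule finite_subset[of _ "set (prefixes c)"]) auto
  ultimately have "card (potential C S) \<le> card (\<Union>c\<in>C. {p. strict_prefix p c \<and> p \<noteq> []})"
    using assms(1) by (intro card_mono) auto
  also have "\<dots> \<le> (\<Sum>c\<in>C. card {p. strict_prefix p c \<and> p \<noteq> []})"
    by (rule card_UN_le[OF assms(1)])
  also have "\<dots> \<le> (\<Sum>w\<in>C. length w - 1)"
    by (rule sum_mono) (rule card_nonempty_strict_prefixes)
  finally show ?thesis .
qed

lemma exists_good_seq:
  assumes "n \<ge> 1" and C: "C \<in> SS n"
  shows "\<exists>m Sq. m \<le> (\<Sum>w\<in>C. length w - 1) \<and> good_seq n C m Sq"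
proof -
  have R: "R n \<in> SS n" using R_in_SS[OF assms(1)] .
  obtain m Sq where m: "m \<le> card (potential C (R n))" "Sq 0 = R n" "Sq m = C" "\<forall>i\<le>m. Sq i \<in> SS n"
    "\<forall>i<m. step n (Sq i) (Sq (Suc i))" "\<forall>i<m. covers (Sq i) C"
    using exists_step_sequence[OF C R covers_R[OF C]] by blast
  moreover have "card (potential C (R n)) \<le> (\<Sum>w\<in>C. length w - 1)"
    using C R card_potential_le_sum_lengths unfolding mem_SS_iff by blast
  ultimately show ?thesis unfolding good_seq_def covers_def by (intro exI[of _ m] exI[of _ Sq]) auto
qed

lemma potential_step_subset:
  assumes "\<sigma> \<in> S" and "S' \<subseteq> S \<union> Nset \<sigma>"
  shows "potential S' S0 \<subseteq> insert \<sigma> (potential S S0)"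
proof
  fix \<tau> assume "\<tau> \<in> potential S' S0"
  then obtain w where \<tau>: "palindrome \<tau>" "\<exists>s\<in>S0. prefix s \<tau>" and "w \<in> S'" "strict_prefix \<tau> w"
    unfolding potential_def by blast
  show "\<tau> \<in> insert \<sigma> (potential S S0)"
  proof (cases "w \<in> S")
    case True
    with \<tau> \<open>strict_prefix \<tau> w\<close> show ?thesis unfolding potential_def by blast
  next
    case False
    then have "w \<in> Nset \<sigma>" using \<open>w \<in> S'\<close> assms(2) by blast
    then have "prefix \<tau> \<sigma>" using \<tau> \<open>strict_prefix \<tau> w\<close> prefix_length_prefix
      unfolding Nset_def by (metis (mono_tags, lifting) mem_Collect_eq prefix_order.less_imp_le)
    then show ?thesis using \<tau> assms(1) unfolding potential_def by (auto simp: prefix_order.le_less)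
  qed
qed

lemma card_potential_le_steps:
  assumes "prefix_free (Sq 0)" and "\<forall>i<m. step n (Sq i) (Sq (Suc i))"
  shows "card (potential (Sq m) (Sq 0)) \<le> m"
proof -
  have "\<forall>i. \<exists>\<sigma>. i < m \<longrightarrow> \<sigma> \<in> Sq i \<and> Sq (Suc i) \<subseteq> Sq i \<union> Nset \<sigma>"
    using assms(2) unfolding step_def Nset_n_def by blast
  then obtain \<sigma> where \<sigma>: "\<And>i. i < m \<Longrightarrow> \<sigma> i \<in> Sq i \<and> Sq (Suc i) \<subseteq> Sq i \<union> Nset (\<sigma> i)"
    by metis
  have "potential (Sq j) (Sq 0) \<subseteq> \<sigma> ` {..<j}" if "j \<le> m" for j
    using that
  proof (induction j)
    case 0
    show ?case using assms(1) unfolding potential_def prefix_free_def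
      by (auto dest: prefix_order.le_less_trans)
  next
    case (Suc j)
    then have "potential (Sq (Suc j)) (Sq 0) \<subseteq> insert (\<sigma> j) (potential (Sq j) (Sq 0))"
      using \<sigma> by (intro potential_step_subset) auto
    with Suc show ?case by (auto simp: lessThan_Suc)
  qed
  then have "card (potential (Sq m) (Sq 0)) \<le> card (\<sigma> ` {..<m})" by (intro card_mono) auto
  also have "\<dots> \<le> m" using card_image_le[of "{..<m}" \<sigma>] by simp
  finally show ?thesis .
qed

definition block_word :: "nat \<Rightarrow> nat \<Rightarrow> nat \<Rightarrow> bool list" where
  "block_word a b j =
     concat (replicate j (replicate a False @ True # replicate b False @ [True])) @ replicate a False"

lemma block_word_0: "block_word a b 0 = replicate a False"
  by (simp add: block_word_def)

lemma block_word_Suc: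
  "block_word a b (Suc j) = replicate a False @ True # replicate b False @ True # block_word a b j"
  by (simp add: block_word_def)

lemma length_block_word: "length (block_word a b j) = j * (a + b + 2) + a"
  by (induction j) (simp_all add: block_word_0 block_word_Suc)

lemma palindrome_block_word: "palindrome (block_word a b j)"
proof -
  let ?x = "replicate a False" and ?y = "True # replicate b False @ [True]"
  have rotate: "?x @ concat (replicate j (?y @ ?x)) = concat (replicate j (?x @ ?y)) @ ?x" for j
    by (induction j) auto
  have "rev (block_word a b j) = ?x @ concat (replicate j (?y @ ?x))"
    by (simp add: block_word_def rev_concat)
  also have "\<dots> = block_word a b j" unfolding rotate by (simp add: block_word_def)
  finally show ?thesis unfolding palindrome_def .
qed

lemma prefix_block_word_add: "prefix (block_word a b j) (block_word a b (j + d))"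
  by (induction j) (cases d, simp_all add: block_word_0 block_word_Suc)

lemma block_word_params_eq:
  assumes "prefix (block_word a b (Suc j)) (block_word a' b' (Suc j'))"
  shows "a = a' \<and> b = b'"
proof -
  have "a = a' \<and> prefix (replicate b False @ True # block_word a b j)
                        (replicate b' False @ True # block_word a' b' j')"
    using assms prefix_replicate_cancel[of False True] unfolding block_word_Suc by blast
  then show ?thesis using prefix_replicate_cancel[of False True] by blast
qed

lemma prefix_False_block_word: "1 \<le> a \<Longrightarrow> prefix [False] (block_word a b j)"
  by (cases j; cases a) (simp_all add: block_word_0 block_word_Suc)

lemma block_word_index_eq:
  assumes "inj_on (\<lambda>i. (a i, b i)) I" and "i \<in> I" and "i' \<in> I"
    and "prefix (block_word (a i) (b i) (Suc j)) (block_word (a i') (b i') (Suc j'))"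
  shows "i = i'"
  using block_word_params_eq[OF assms(4)] assms(1-3) unfolding inj_on_def by blast

lemma block_code_in_SS:
  fixes a b :: "nat \<Rightarrow> nat"
  assumes inj: "inj_on (\<lambda>i. (a i, b i)) {..<n}" and pos: "\<And>i. i < n \<Longrightarrow> 1 \<le> a i"
    and "1 \<le> K" and len: "\<And>i. i < n \<Longrightarrow> K * (a i + b i + 2) + a i \<le> n"
  shows "(\<lambda>i. block_word (a i) (b i) K) ` {..<n} \<in> SS n"
proof -
  define B where "B = (\<lambda>i. block_word (a i) (b i) K) ` {..<n}"
  obtain K0 where K0: "K = Suc K0" using \<open>1 \<le> K\<close> by (cases K) auto
  have "prefix_free B"
    unfolding prefix_free_def B_def
  proof (clarify)
    fix i i' assume "i < n" "i' < n"
      and sp: "strict_prefix (block_word (a i) (b i) K) (block_word (a i') (b i') K)"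
    then have "i = i'" using block_word_index_eq[OF inj] K0
      by (metis lessThan_iff prefix_order.less_imp_le)
    then show False using sp by simp
  qed
  moreover have "inj_on (\<lambda>i. block_word (a i) (b i) K) {..<n}"
    using block_word_index_eq[OF inj] K0 by (intro inj_onI) (metis prefix_order.refl)
  then have "card B = n" unfolding B_def by (simp add: card_image)
  moreover have "palindrome v \<and> v \<noteq> [] \<and> v \<noteq> [True] \<and> length v \<le> n" if v: "v \<in> B" for v
  proof -
    obtain i where i: "i < n" "v = block_word (a i) (b i) K" using v unfolding B_def by blast
    then have "prefix [False] v" using prefix_False_block_word pos by blast
    then have "v \<noteq> [] \<and> v \<noteq> [True]" by (cases v) auto
    then show ?thesis using i len by (simp add: palindrome_block_word length_block_word)
  qed
  ultimately show ?thesis unfolding mem_SS_iff B_def by auto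
qed

lemma card_potential_block_code:
  fixes a b :: "nat \<Rightarrow> nat"
  assumes inj: "inj_on (\<lambda>i. (a i, b i)) {..<n}" and pos: "\<And>i. i < n \<Longrightarrow> 1 \<le> a i"
  shows "n * (K - 1) \<le> card (potential ((\<lambda>i. block_word (a i) (b i) K) ` {..<n}) (R n))"
proof -
  define w where "w i j = block_word (a i) (b i) j" for i j
  define B where "B = (\<lambda>i. w i K) ` {..<n}"
  define E where "E = (\<lambda>(i, j). w i j) ` ({..<n} \<times> {1..<K})"
  have "inj_on (\<lambda>(i, j). w i j) ({..<n} \<times> {1..<K})"
  proof (rule inj_onI, clarify)
    fix i j i' j' assume "i < n" "j \<in> {1..<K}" "i' < n" "j' \<in> {1..<K}" and eq: "w i j = w i' j'"
    then have "i = i'" using block_word_index_eq[OF inj, of i i' "j - 1" "j' - 1"] by (simp add: w_def)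
    moreover from this have "j * (a i + b i + 2) = j' * (a i + b i + 2)"
      using arg_cong[OF eq, of length] by (simp add: w_def length_block_word)
    ultimately show "i = i' \<and> j = j'" using mult_right_cancel[of "a i + b i + 2" j j'] by auto
  qed
  then have "card E = n * (K - 1)" unfolding E_def by (simp add: card_image card_cartesian_product)
  moreover have "E \<subseteq> potential B (R n)"
  proof
    fix \<tau> assume "\<tau> \<in> E"
    then obtain i j where ij: "i < n" "1 \<le> j" "j < K" and \<tau>: "\<tau> = w i j" unfolding E_def by auto
    have "prefix \<tau> (w i (j + (K - j)))" unfolding \<tau> w_def by (rule prefix_block_word_add)
    moreover have "j * (a i + b i + 2) < K * (a i + b i + 2)"
      using ij by (intro mult_strict_right_mono) auto
    then have "length \<tau> < length (w i K)" unfolding \<tau> w_def length_block_word by linarith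
    ultimately have "strict_prefix \<tau> (w i K)" using ij by (auto simp: prefix_order.le_less)
    moreover have "w i K \<in> B" "[False] \<in> R n" using ij unfolding B_def R_def by auto
    moreover have "prefix [False] \<tau>" using prefix_False_block_word pos ij unfolding \<tau> w_def by blast
    ultimately show "\<tau> \<in> potential B (R n)"
      unfolding potential_def \<tau> w_def by (blast intro: palindrome_block_word)
  qed
  moreover have "finite (potential B (R n))" by (simp add: finite_potential B_def)
  ultimately show ?thesis unfolding B_def w_def by (metis card_mono)
qed

lemma card_potential_le_good_seq:
  assumes "good_seq n B m Sq"
  shows "card (potential B (R n)) \<le> m"
  using card_potential_le_steps[of Sq m n] prefix_free_R assms unfolding good_seq_def by auto

lemma div_floor_sqrt_bound:
  fixes s n :: nat
  assumes "20 \<le> s" and "s\<^sup>2 \<le> n"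
  shows "s + 13 \<le> 6 * (n div (2 * s + 4))"
proof (rule ccontr)
  define q where "q = n div (2 * s + 4)"
  have "n mod (2 * s + 4) < 2 * s + 4" by simp
  moreover have "(q + 1) * (2 * s + 4) = q * (2 * s + 4) + (2 * s + 4)" by simp
  ultimately have "n < (q + 1) * (2 * s + 4)"
    unfolding q_def using div_mult_mod_eq[of n "2 * s + 4"] by linarith
  assume "\<not> ?thesis"
  then have "6 * (q + 1) * (2 * s + 4) \<le> (s + 18) * (2 * s + 4)" unfolding q_def by simp
  moreover note \<open>n < (q + 1) * (2 * s + 4)\<close>
  ultimately have "6 * (s * s) < (s + 18) * (2 * s + 4)"
    using assms(2) unfolding power2_eq_square by linarith
  then have "4 * (s * s) < 40 * s + 72" by (simp add: algebra_simps)
  moreover have "20 * s \<le> s * s" using assms(1) by simp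
  ultimately show False using assms(1) by linarith
qed

lemma exists_code_with_large_potential:
  assumes "400 \<le> n"
  shows "\<exists>B\<in>SS n. n * (n div (2 * floor_sqrt n + 4) - 2) \<le> card (potential B (R n))"
proof -
  define s where "s = floor_sqrt n"
  define t where "t = s + 1"
  define K where "K = n div (2 * s + 4) - 1"
  have "20 \<le> s" unfolding s_def using assms by (intro le_floor_sqrtI) simp
  then have "1 \<le> K"
    using div_floor_sqrt_bound[of s n] unfolding K_def s_def by simp
  have "n < t * t" unfolding t_def s_def using Suc_floor_sqrt_power2_gt[of n]
    by (simp add: power2_eq_square)
  then have a_le: "i div t + 1 \<le> t" if "i < n" for i
    using that by (simp add: t_def less_mult_imp_div_less Suc_le_eq)
  have "inj_on (\<lambda>i. (i div t + 1, i mod t + 1)) {..<n}"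
    by (intro inj_onI) (metis Pair_inject add_right_cancel div_mult_mod_eq)
  moreover have "K * ((i div t + 1) + (i mod t + 1) + 2) + (i div t + 1) \<le> n" if "i < n" for i
  proof -
    have "i mod t + 1 \<le> t" unfolding t_def by (simp add: Suc_le_eq)
    then have "(i div t + 1) + (i mod t + 1) + 2 \<le> 2 * s + 4" and "i div t + 1 \<le> 2 * s + 4"
      using a_le[OF that] unfolding t_def by linarith+
    then have "K * ((i div t + 1) + (i mod t + 1) + 2) + (i div t + 1) \<le> K * (2 * s + 4) + (2 * s + 4)"
      using mult_le_mono2[of _ _ K] by (meson add_mono)
    also have "\<dots> = (K + 1) * (2 * s + 4)" by simp
    also have "\<dots> = (n div (2 * s + 4)) * (2 * s + 4)" using \<open>1 \<le> K\<close> unfolding K_def by simp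
    also have "\<dots> \<le> n" by simp
    finally show ?thesis .
  qed
  ultimately have "(\<lambda>i. block_word (i div t + 1) (i mod t + 1) K) ` {..<n} \<in> SS n"
    and "n * (K - 1) \<le> card (potential ((\<lambda>i. block_word (i div t + 1) (i mod t + 1) K) ` {..<n}) (R n))"
    using block_code_in_SS[where a = "\<lambda>i. i div t + 1" and b = "\<lambda>i. i mod t + 1"] \<open>1 \<le> K\<close>
      card_potential_block_code[where a = "\<lambda>i. i div t + 1" and b = "\<lambda>i. i mod t + 1"] by auto
  moreover have "K - 1 = n div (2 * floor_sqrt n + 4) - 2" unfolding K_def s_def by simp
  ultimately show ?thesis by metis
qed

lemma powr_three_halves_le:
  assumes "400 \<le> n"
  shows "real n powr 1.5 \<le> 6 * real (n * (n div (2 * floor_sqrt n + 4) - 2))"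
proof -
  define s where "s = floor_sqrt n"
  have "20 \<le> s" unfolding s_def using assms by (intro le_floor_sqrtI) simp
  then have "s + 1 \<le> 6 * (n div (2 * s + 4) - 2)"
    using div_floor_sqrt_bound[of s n] unfolding s_def by simp
  have "real n < (real s + 1)\<^sup>2"
    using Suc_floor_sqrt_power2_gt[of n] unfolding s_def
      by (metis of_nat_Suc of_nat_less_iff of_nat_power add.commute)
  then have "sqrt (real n) \<le> sqrt ((real s + 1)\<^sup>2)" by (intro real_sqrt_le_mono) simp
  then have "sqrt (real n) \<le> real s + 1" by simp
  have "(1.5::real) = 1 + 1/2" by simp
  then have "real n powr 1.5 = real n powr 1 * real n powr (1/2)"
    by (simp only: powr_add)
  also have "\<dots> = real n * sqrt (real n)"
    by (cases "n = 0") (simp_all add: powr_half_sqrt)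
  also have "\<dots> \<le> real n * (real s + 1)" using \<open>sqrt (real n) \<le> real s + 1\<close> by (simp add: mult_left_mono)
  also have "\<dots> \<le> real n * (6 * real (n div (2 * s + 4) - 2))"
    using \<open>s + 1 \<le> 6 * (n div (2 * s + 4) - 2)\<close> by (intro mult_left_mono) linarith+
  finally show ?thesis unfolding s_def by simp
qed

lemma exists_code_requiring_long_sequences:
  assumes n: "400 \<le> n"
  shows "\<exists>B\<in>SS n. \<forall>m Sq. good_seq n B m Sq \<longrightarrow> 1/6 * real n powr 1.5 \<le> real m"
proof -
  obtain B where "B \<in> SS n" and B: "n * (n div (2 * floor_sqrt n + 4) - 2) \<le> card (potential B (R n))"
    using exists_code_with_large_potential[OF n] by blast
  moreover have "1/6 * real n powr 1.5 \<le> real m" if "good_seq n B m Sq" for m Sq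
  proof -
    have "n * (n div (2 * floor_sqrt n + 4) - 2) \<le> m"
      using B card_potential_le_good_seq[OF that] by linarith
    then show ?thesis using powr_three_halves_le[OF n] of_nat_le_iff by fastforce
  qed
  ultimately show ?thesis by blast
qed

theorem theorem2:
  shows "(\<forall>n\<ge>1. \<forall>C\<in>SS n. \<exists>m Sq. m \<le> (\<Sum>w\<in>C. length w - 1) \<and> good_seq n C m Sq)
    \<and> (\<exists>c::real. c > 0 \<and> (\<exists>N. \<forall>n\<ge>N. \<exists>B\<in>SS n.
          \<forall>m Sq. good_seq n B m Sq \<longrightarrow> c * real n powr 1.5 \<le> real m))"
proof
  show "\<forall>n\<ge>1. \<forall>C\<in>SS n. \<exists>m Sq. m \<le> (\<Sum>w\<in>C. length w - 1) \<and> good_seq n C m Sq"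
    using exists_good_seq by blast
  show "\<exists>c::real. c > 0 \<and> (\<exists>N. \<forall>n\<ge>N. \<exists>B\<in>SS n.
      \<forall>m Sq. good_seq n B m Sq \<longrightarrow> c * real n powr 1.5 \<le> real m)"
    using exists_code_requiring_long_sequences by (intro exI[of _ "1/6"] conjI exI[of _ 400]) simp_all
qed

end
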